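(* Let $\mathcal{X}$ and $\mathcal{Y}$ be triangle meshes with $n_{\mathcal{X}}$ and $n_{\mathcal{Y}}$ vertices and symmetric positive definite mass matrices $M_{\mathcal{X}}\in\mathbb{R}^{n_{\mathcal{X}}\times n_{\mathcal{X}}}$, $M_{\mathcal{Y}}\in\mathbb{R}^{n_{\mathcal{Y}}\times n_{\mathcal{Y}}}$. Let $\Phi_{\mathcal{X},k}\in\mathbb{R}^{n_{\mathcal{X}}\times k}$ and $\Phi_{\mathcal{Y},k}\in\mathbb{R}^{n_{\mathcal{Y}}\times k}$ be the matrices of the first $k$ Laplacian eigenfunctions, normalized so that $\Phi_{\mathcal{X},k}^{\top}M_{\mathcal{X}}\Phi_{\mathcal{X},k}=I$ and $\Phi_{\mathcal{Y},k}^{\top}M_{\mathcal{Y}}\Phi_{\mathcal{Y},k}=I$, and set $\Phi_{\mathcal{X},k}^{\dagger}=\Phi_{\mathcal{X},k}^{\top}M_{\mathcal{X}}$, $\Phi_{\mathcal{Y},k}^{\dagger}=\Phi_{\mathcal{Y},k}^{\top}M_{\mathcal{Y}}$. Let $G_{\mathcal{X}},G_{\mathcal{Y}}\in\mathbb{R}^{k\times k}$ be diagonal matrices with diagonal entries in $(0,1]$, and define the learnable bases $\Psi_{\mathcal{X},k}=\Phi_{\mathcal{X},k}G_{\mathcal{X}}$, $\Psi_{\mathcal{Y},k}=\Phi_{\mathcal{Y},k}G_{\mathcal{Y}}$ with $\Psi_{\mathcal{X},k}^{\dagger}=G_{\mathcal{X}}^{-1}\Phi_{\mathcal{X},k}^{\top}M_{\mathcal{X}}$,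 $\Psi_{\mathcal{Y},k}^{\dagger}=G_{\mathcal{Y}}^{-1}\Phi_{\mathcal{Y},k}^{\top}M_{\mathcal{Y}}$. Let $F_{\mathcal{X}}\in\mathbb{R}^{n_{\mathcal{X}}\times d}$, $F_{\mathcal{Y}}\in\mathbb{R}^{n_{\mathcal{Y}}\times d}$ be feature matrices and $\Pi_{\mathcal{YX}}\in\mathbb{R}^{n_{\mathcal{Y}}\times n_{\mathcal{X}}}$ a matrix representing a pointwise map from $\mathcal{Y}$ to $\mathcal{X}$. Consider the problem $$C^{\mathrm{A}}_{\mathcal{XY}}=\arg\min_{C\in\mathbb{R}^{k\times k}}\left\|C\,\Psi_{\mathcal{X},k}^{\dagger}F_{\mathcal{X}}-\Psi_{\mathcal{Y},k}^{\dagger}F_{\mathcal{Y}}\right\|_{\mathrm{F}}^2+\lambda\left\|C\Lambda_{\mathcal{X}}-\Lambda_{\mathcal{Y}}C\right\|_{\mathrm{F}}^2,$$ where $\Lambda_{\mathcal{X}},\Lambda_{\mathcal{Y}}$ are the diagonal matrices of the first $k$ eigenvalues. Suppose (a) $\Pi_{\mathcal{YX}}F_{\mathcal{X}}=F_{\mathcal{Y}}$; (b) the columns of $F_{\mathcal{X}}$ lie in the span of the columns of $\Phi_{\mathcal{X},k}$ and the columns of $F_{\mathcal{Y}}$ lie in the span of the columns of $\Phi_{\mathcal{Y},k}$; (c) $\Phi_{\mathcal{X},k}^{\dagger}F_{\mathcal{X}}\in\mathbb{R}^{k\times d}$ and $\Phi_{\mathcal{Y},k}^{\dagger}F_{\mathcal{Y}}\in\mathbb{R}^{k\times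 d}$ are full rank, and $\lambda=0$. Then the minimizer $C^{\mathrm{A}}_{\mathcal{XY}}$ is unique and equals $\Psi_{\mathcal{Y},k}^{\dagger}\Pi_{\mathcal{YX}}\Psi_{\mathcal{X},k}$.
   Context: The matrices $\Psi_{\cdot,k}=\Phi_{\cdot,k}G_{\cdot}$ are called learnable spectral bases; the diagonal matrices $G$ (with entries in $(0,1]$) are called inhibition functions. $\|\cdot\|_{\mathrm{F}}$ is the Frobenius norm. "Full rank" for a $k\times d$ matrix means rank $k$ (requiring $d\ge k$). *)

theory Defs
  imports "HOL-Analysis.Analysis"
begin

definition frob_norm :: "real^'n^'m \<Rightarrow> real" where
  "frob_norm A = sqrt (\<Sum>i\<in>UNIV. \<Sum>j\<in>UNIV. (A $ i $ j)^2)"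

definition is_diag :: "real^'n^'n \<Rightarrow> bool" where
  "is_diag D \<longleftrightarrow> (\<forall>i j. i \<noteq> j \<longrightarrow> D $ i $ j = 0)"

definition spd :: "real^'n^'n \<Rightarrow> bool" where
  "spd M \<longleftrightarrow> transpose M = M \<and> (\<forall>x. x \<noteq> 0 \<longrightarrow> x \<bullet> (M *v x) > 0)"

definition pointwise_map :: "real^'n^'m \<Rightarrow> bool" where
  "pointwise_map P \<longleftrightarrow> (\<forall>i. \<exists>j. \<forall>j'. P $ i $ j' = (if j' = j then 1 else 0))"

end

theory Submission
  imports Defs
begin

text \<open>With \<open>\<lambda> = 0\<close> the energy is the squared residual \<open>\<parallel>C A - B\<parallel>\<^sub>F\<^sup>2\<close> with
  \<open>A = G\<^sub>X\<^sup>-\<^sup>1 \<Phi>\<^sub>X\<^sup>\<dagger> F\<^sub>X\<close> and \<open>B = \<Psi>\<^sub>Y\<^sup>\<dagger> F\<^sub>Y\<close>. Because the columns of \<open>F\<^sub>X\<close> lie in the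
  span of \<open>\<Phi>\<^sub>X\<close>, the projection \<open>\<Phi>\<^sub>X \<Phi>\<^sub>X\<^sup>\<dagger>\<close> fixes \<open>F\<^sub>X\<close>, so \<open>\<Psi>\<^sub>X A = F\<^sub>X\<close> and the
  candidate \<open>C\<^sub>0 = \<Psi>\<^sub>Y\<^sup>\<dagger> \<Pi> \<Psi>\<^sub>X\<close> satisfies \<open>C\<^sub>0 A = \<Psi>\<^sub>Y\<^sup>\<dagger> \<Pi> F\<^sub>X = B\<close>: it has energy zero.
  Every minimiser therefore solves \<open>C A = B\<close> exactly, and since \<open>A\<close> has full row
  rank it has a right inverse, which forces \<open>C = C\<^sub>0\<close>.\<close>

lemma frob_norm_eq_0_iff: "frob_norm A = 0 \<longleftrightarrow> A = 0"
  unfolding frob_norm_def by (simp add: sum_nonneg sum_nonneg_eq_0_iff vec_eq_iff)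

lemma frob_norm_zero: "frob_norm 0 = 0"
  by (simp add: frob_norm_eq_0_iff)

lemma invertible_diagonal:
  fixes G :: "real^'n^'n"
  assumes "is_diag G" and "\<And>i. G $ i $ i \<noteq> 0"
  shows "invertible G"
  using assms by (simp add: invertible_det_nz det_diagonal is_diag_def)

lemma matrix_inv_inverse:
  assumes "invertible A"
  shows matrix_inv_right: "A ** matrix_inv A = mat 1"
    and matrix_inv_left: "matrix_inv A ** A = mat 1"
  using someI_ex[OF assms[unfolded invertible_def]] by (simp_all add: matrix_inv_def)

lemma invertible_matrix_inv: "invertible A \<Longrightarrow> invertible (matrix_inv A)"
  by (meson invertible_def matrix_inv_inverse)

lemma rank_invertible_mult:
  fixes G :: "real^'m^'m" and A :: "real^'n^'m"
  assumes "invertible G"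
  shows "rank (G ** A) = rank A"
proof (rule antisym)
  show "rank (G ** A) \<le> rank A" by (rule rank_mul_le_right)
  have "A = matrix_inv G ** (G ** A)"
    using assms by (simp add: matrix_mul_assoc matrix_inv_left)
  then show "rank A \<le> rank (G ** A)" by (metis rank_mul_le_right)
qed

lemma matrix_right_cancel_full_row_rank:
  fixes A :: "real^'n^'m" and C D :: "real^'m^'p"
  assumes "rank A = CARD('m)" and "C ** A = D ** A"
  shows "C = D"
proof -
  obtain R where "A ** R = mat 1"
    using assms(1) by (metis full_rank_surjective matrix_right_invertible_surjective)
  then show ?thesis
    using assms(2) by (metis matrix_mul_assoc matrix_mul_rid)
qed

lemma span_columns_subset_range:
  fixes A :: "real^'n^'m"
  shows "span (columns A) \<subseteq> range ((*v) A)"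
proof (rule span_minimal)
  show "columns A \<subseteq> range ((*v) A)" by (auto simp: columns_image_basis)
  show "subspace (range ((*v) A))"
    by (metis linear_subspace_image subspace_UNIV matrix_vector_mul_linear)
qed

lemma columns_subset_span_factor:
  fixes F :: "real^'d^'n" and P :: "real^'k^'n"
  assumes "columns F \<subseteq> span (columns P)"
  shows "\<exists>W. F = P ** W"
proof -
  have "\<forall>j. \<exists>w. column j F = P *v w"
    using assms span_columns_subset_range by (fastforce simp: columns_def)
  then obtain w where w: "\<And>j. column j F = P *v w j" by metis
  have "F $ i $ j = (P ** transpose (\<chi> j. w j)) $ i $ j" for i j
  proof -
    have "F $ i $ j = (P *v w j) $ i" by (simp flip: w add: column_def)
    then show ?thesis
      by (simp add: matrix_vector_mult_def matrix_matrix_mult_def transpose_def)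
  qed
  then show ?thesis by (auto simp: vec_eq_iff)
qed

lemma left_inverse_fixes_column_span:
  fixes P :: "real^'k^'n" and L :: "real^'n^'k" and F :: "real^'d^'n"
  assumes "L ** P = mat 1" and "columns F \<subseteq> span (columns P)"
  shows "P ** (L ** F) = F"
proof -
  obtain W where "F = P ** W" using columns_subset_span_factor[OF assms(2)] ..
  then show ?thesis using assms(1) by (metis matrix_mul_assoc matrix_mul_lid)
qed

lemma frob_residual_minimisers_eq:
  fixes A :: "real^'d^'k" and B :: "real^'d^'m" and C\<^sub>0 :: "real^'k^'m"
  assumes "rank A = CARD('k)" and "C\<^sub>0 ** A = B"
  shows "{C. \<forall>C'. (frob_norm (C ** A - B))\<^sup>2 \<le> (frob_norm (C' ** A - B))\<^sup>2} = {C\<^sub>0}"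
proof (intro set_eqI iffI)
  fix C assume "C \<in> {C. \<forall>C'. (frob_norm (C ** A - B))\<^sup>2 \<le> (frob_norm (C' ** A - B))\<^sup>2}"
  then have "(frob_norm (C ** A - B))\<^sup>2 \<le> (frob_norm (C\<^sub>0 ** A - B))\<^sup>2" by blast
  then have "frob_norm (C ** A - B) = 0"
    using assms(2) by (simp add: frob_norm_zero)
  then have "C ** A = C\<^sub>0 ** A"
    using assms(2) by (simp add: frob_norm_eq_0_iff)
  then show "C \<in> {C\<^sub>0}"
    using matrix_right_cancel_full_row_rank[OF assms(1)] by blast
qed (use assms(2) in \<open>simp add: frob_norm_zero\<close>)

theorem mainTheorem1:
  fixes MX :: "real^'nx^'nx" and MY :: "real^'ny^'ny"
    and LX :: "real^'nx^'nx" and LY :: "real^'ny^'ny"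
    and PhiX :: "real^'k^'nx" and PhiY :: "real^'k^'ny"
    and LamX :: "real^'k^'k" and LamY :: "real^'k^'k"
    and GX :: "real^'k^'k" and GY :: "real^'k^'k"
    and FX :: "real^'d^'nx" and FY :: "real^'d^'ny"
    and Pi :: "real^'nx^'ny"
    and lambda :: real
  assumes MX_spd: "spd MX" and MY_spd: "spd MY"
    and LX_sym: "transpose LX = LX" and LY_sym: "transpose LY = LY"
    and LamX_diag: "is_diag LamX" and LamY_diag: "is_diag LamY"
    and eigX: "LX ** PhiX = MX ** PhiX ** LamX"
    and eigY: "LY ** PhiY = MY ** PhiY ** LamY"
    and orthX: "transpose PhiX ** MX ** PhiX = mat 1"
    and orthY: "transpose PhiY ** MY ** PhiY = mat 1"
    and GX_diag: "is_diag GX" and GY_diag: "is_diag GY"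
    and GX_range: "\<forall>i. 0 < GX $ i $ i \<and> GX $ i $ i \<le> 1"
    and GY_range: "\<forall>i. 0 < GY $ i $ i \<and> GY $ i $ i \<le> 1"
    and Pi_map: "pointwise_map Pi"
    and a: "Pi ** FX = FY"
    and bX: "columns FX \<subseteq> span (columns PhiX)"
    and bY: "columns FY \<subseteq> span (columns PhiY)"
    and cX: "rank (transpose PhiX ** MX ** FX) = CARD('k)"
    and cY: "rank (transpose PhiY ** MY ** FY) = CARD('k)"
    and lam0: "lambda = 0"
  shows "(let PsiX = PhiX ** GX; PsiY = PhiY ** GY;
              PsiXd = matrix_inv GX ** transpose PhiX ** MX;
              PsiYd = matrix_inv GY ** transpose PhiY ** MY;
              E = (\<lambda>C::real^'k^'k. (frob_norm (C ** PsiXd ** FX - PsiYd ** FY))^2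
                     + lambda * (frob_norm (C ** LamX - LamY ** C))^2)
          in {C. \<forall>C'. E C \<le> E C'} = {PsiYd ** Pi ** PsiX})"
proof -
  define PsiYd where "PsiYd = matrix_inv GY ** transpose PhiY ** MY"
  define A where "A = matrix_inv GX ** (transpose PhiX ** MX ** FX)"
  have GX_inv: "invertible GX"
    using GX_range by (intro invertible_diagonal GX_diag) (metis less_irrefl)
  have "rank A = CARD('k)"
    unfolding A_def using cX by (simp add: rank_invertible_mult invertible_matrix_inv GX_inv)
  moreover have "(PsiYd ** Pi ** (PhiX ** GX)) ** A = PsiYd ** FY"
  proof -
    have "(PsiYd ** Pi ** (PhiX ** GX)) ** A
        = PsiYd ** Pi ** (PhiX ** ((GX ** matrix_inv GX) ** (transpose PhiX ** MX ** FX)))"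
      unfolding A_def by (simp add: matrix_mul_assoc)
    also have "\<dots> = PsiYd ** Pi ** (PhiX ** (transpose PhiX ** MX ** FX))"
      by (simp add: matrix_inv_right GX_inv)
    also have "\<dots> = PsiYd ** Pi ** FX"
      by (simp add: left_inverse_fixes_column_span[OF orthX bX])
    finally show ?thesis by (metis a matrix_mul_assoc)
  qed
  ultimately have "{C. \<forall>C'. (frob_norm (C ** A - PsiYd ** FY))\<^sup>2 \<le> (frob_norm (C' ** A - PsiYd ** FY))\<^sup>2}
      = {PsiYd ** Pi ** (PhiX ** GX)}"
    by (rule frob_residual_minimisers_eq)
  then show ?thesis
    unfolding A_def PsiYd_def lam0 Let_def by (simp add: matrix_mul_assoc)
qed

end
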